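(* Let $A$ be a partially symmetric 0-dialgebra. On $A\oplus A$ define $(a,b)\dashv(c,d)=(a\dashv c-d\vdash b^\ast,\; a^\ast\dashv d+c\vdash b)$, $(a,b)\vdash(c,d)=(a\vdash c-d\dashv b^\ast,\; a^\ast\vdash d+c\dashv b)$ and $(a,b)^\ast=(a^\ast,-b)$. Then $A\oplus A$ with these operations is a partially symmetric 0-dialgebra.
   Context: A 0-dialgebra with involution is a vector space with bilinear operations $\dashv,\vdash$ satisfying $a\dashv(b\dashv c)=a\dashv(b\vdash c)$ and $(a\dashv b)\vdash c=(a\vdash b)\vdash c$, together with a linear map $\ast$ with $(a^\ast)^\ast=a$, $(a\dashv b)^\ast=b^\ast\vdash a^\ast$, $(a\vdash b)^\ast=b^\ast\dashv a^\ast$. Write $\mathrm{sym}(x)=x+x^\ast$ and $\{x,y\}=x\dashv y-y\vdash x$. Such a structure is partially symmetric if $\{\mathrm{sym}(x),y\}=0$ and $\{x,\mathrm{sym}(y)\}=0$ for all $x,y$. *)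

theory Defs
  imports Main "HOL.Vector_Spaces" "HOL-Library.Product_Plus"
begin

definition bilinear_op :: "('k::field \<Rightarrow> 'v::ab_group_add \<Rightarrow> 'v) \<Rightarrow> ('v \<Rightarrow> 'v \<Rightarrow> 'v) \<Rightarrow> bool" where
  "bilinear_op scale m \<longleftrightarrow>
     (\<forall>x. Vector_Spaces.linear scale scale (m x)) \<and>
     (\<forall>y. Vector_Spaces.linear scale scale (\<lambda>x. m x y))"

definition zero_dialg_inv ::
  "('k::field \<Rightarrow> 'v::ab_group_add \<Rightarrow> 'v) \<Rightarrow> ('v \<Rightarrow> 'v \<Rightarrow> 'v) \<Rightarrow> ('v \<Rightarrow> 'v \<Rightarrow> 'v) \<Rightarrow> ('v \<Rightarrow> 'v) \<Rightarrow> bool" where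
  "zero_dialg_inv scale L R st \<longleftrightarrow>
     Vector_Spaces.vector_space scale \<and>
     bilinear_op scale L \<and> bilinear_op scale R \<and>
     Vector_Spaces.linear scale scale st \<and>
     (\<forall>a b c. L a (L b c) = L a (R b c)) \<and>
     (\<forall>a b c. R (L a b) c = R (R a b) c) \<and>
     (\<forall>a. st (st a) = a) \<and>
     (\<forall>a b. st (L a b) = R (st b) (st a)) \<and>
     (\<forall>a b. st (R a b) = L (st b) (st a))"

definition symm :: "('v::ab_group_add \<Rightarrow> 'v) \<Rightarrow> 'v \<Rightarrow> 'v" where
  "symm st x = x + st x"

definition brk :: "('v::ab_group_add \<Rightarrow> 'v \<Rightarrow> 'v) \<Rightarrow> ('v \<Rightarrow> 'v \<Rightarrow> 'v) \<Rightarrow> 'v \<Rightarrow> 'v \<Rightarrow> 'v" where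
  "brk L R x y = L x y - R y x"

definition partially_symmetric ::
  "('k::field \<Rightarrow> 'v::ab_group_add \<Rightarrow> 'v) \<Rightarrow> ('v \<Rightarrow> 'v \<Rightarrow> 'v) \<Rightarrow> ('v \<Rightarrow> 'v \<Rightarrow> 'v) \<Rightarrow> ('v \<Rightarrow> 'v) \<Rightarrow> bool" where
  "partially_symmetric scale L R st \<longleftrightarrow>
     zero_dialg_inv scale L R st \<and>
     (\<forall>x y. brk L R (symm st x) y = 0) \<and>
     (\<forall>x y. brk L R x (symm st y) = 0)"

text \<open>The double A \<oplus> A, carried by the type 'v \<times> 'v with componentwise
  structure (HOL's standard instance of ab_group_add on pairs).\<close>

definition dbl_scale :: "('k \<Rightarrow> 'v \<Rightarrow> 'v) \<Rightarrow> 'k \<Rightarrow> 'v \<times> 'v \<Rightarrow> 'v \<times> 'v" where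
  "dbl_scale scale k p = (scale k (fst p), scale k (snd p))"

definition dbl_L :: "('v::ab_group_add \<Rightarrow> 'v \<Rightarrow> 'v) \<Rightarrow> ('v \<Rightarrow> 'v \<Rightarrow> 'v) \<Rightarrow> ('v \<Rightarrow> 'v)
     \<Rightarrow> 'v \<times> 'v \<Rightarrow> 'v \<times> 'v \<Rightarrow> 'v \<times> 'v" where
  "dbl_L L R st p q = (case p of (a, b) \<Rightarrow> case q of (c, d) \<Rightarrow>
      (L a c - R d (st b), L (st a) d + R c b))"

definition dbl_R :: "('v::ab_group_add \<Rightarrow> 'v \<Rightarrow> 'v) \<Rightarrow> ('v \<Rightarrow> 'v \<Rightarrow> 'v) \<Rightarrow> ('v \<Rightarrow> 'v)
     \<Rightarrow> 'v \<times> 'v \<Rightarrow> 'v \<times> 'v \<Rightarrow> 'v \<times> 'v" where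
  "dbl_R L R st p q = (case p of (a, b) \<Rightarrow> case q of (c, d) \<Rightarrow>
      (R a c - L d (st b), R (st a) d + L c b))"

definition dbl_st :: "('v::ab_group_add \<Rightarrow> 'v) \<Rightarrow> 'v \<times> 'v \<Rightarrow> 'v \<times> 'v" where
  "dbl_st st p = (st (fst p), - snd p)"

end

theory Submission
  imports Defs
begin

text \<open>Every axiom of a 0-dialgebra with involution on the double splits componentwise into
  axioms of \<open>A\<close>: the two associativity laws of the double reduce to those of \<open>A\<close>, and its
  anti-automorphism laws to those of \<open>*\<close> together with involutivity. Partial symmetry enters
  only at the end: the symmetric elements of the double are \<open>(sym a, 0)\<close>, and since \<open>sym a\<close>
  is fixed by \<open>*\<close>, brackets with them reduce to brackets in \<open>A\<close> with a symmetric argument.\<close>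

lemma bilinear_op_distribs:
  assumes "bilinear_op scale m"
  shows "m x (y + z) = m x y + m x z" "m (x + y) z = m x z + m y z"
    and "m x (- y) = - m x y" "m (- x) y = - m x y"
    and "m x (y - z) = m x y - m x z" "m (x - y) z = m x z - m y z"
    and "m x (scale c y) = scale c (m x y)" "m (scale c x) y = scale c (m x y)"
    and "m x 0 = 0" "m 0 y = 0"
proof -
  have right: "module_hom scale scale (m x)" and left: "module_hom scale scale (\<lambda>x. m x y)" for x y
    using assms by (simp_all add: bilinear_op_def linear_iff_module_hom)
  show "m x (y + z) = m x y + m x z" "m x (- y) = - m x y" "m x (y - z) = m x y - m x z"
    "m x (scale c y) = scale c (m x y)" "m x 0 = 0"
    by (simp_all add: module_hom.add[OF right] module_hom.neg[OF right] module_hom.diff[OF right]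
        module_hom.scale[OF right] module_hom.zero[OF right])
  show "m (x + y) z = m x z + m y z" "m (- x) y = - m x y" "m (x - y) z = m x z - m y z"
    "m (scale c x) y = scale c (m x y)" "m 0 y = 0"
    using module_hom.add[OF left] module_hom.neg[OF left] module_hom.diff[OF left]
      module_hom.scale[OF left] module_hom.zero[OF left] by simp_all
qed

lemma linear_distribs:
  assumes "Vector_Spaces.linear scale scale f"
  shows "f (x + y) = f x + f y" "f (- x) = - f x" "f (x - y) = f x - f y"
    and "f (scale c x) = scale c (f x)" "f 0 = 0"
  using assms[unfolded linear_iff_module_hom]
  by (simp_all add: module_hom.add module_hom.neg module_hom.diff module_hom.scale module_hom.zero)

lemma vector_space_dbl_scale:
  assumes "vector_space scale"
  shows "vector_space (dbl_scale scale)"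
proof -
  interpret vector_space scale by (fact assms)
  show ?thesis
    by unfold_locales (auto simp: dbl_scale_def scale_right_distrib scale_left_distrib)
qed

lemma dbl_R_eq_dbl_L_swap: "dbl_R L R st = dbl_L R L st"
  by (simp add: fun_eq_iff dbl_L_def dbl_R_def)

lemma linear_dbl_st:
  assumes "Vector_Spaces.linear scale scale st"
  shows "Vector_Spaces.linear (dbl_scale scale) (dbl_scale scale) (dbl_st st)"
proof -
  interpret vector_space scale
    using assms by (simp add: linear_iff)
  show ?thesis
    using vector_space_dbl_scale[OF vector_space_axioms]
    by (simp add: linear_iff dbl_st_def dbl_scale_def linear_distribs[OF assms])
qed

lemma bilinear_op_dbl_L:
  assumes "vector_space scale" and "bilinear_op scale L" "bilinear_op scale R"
    and "Vector_Spaces.linear scale scale st"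
  shows "bilinear_op (dbl_scale scale) (dbl_L L R st)"
proof -
  interpret vector_space scale by (fact assms(1))
  note distribs = bilinear_op_distribs[OF assms(2)] bilinear_op_distribs[OF assms(3)]
    linear_distribs[OF assms(4)]
  show ?thesis
    using vector_space_dbl_scale[OF assms(1)]
    by (simp add: bilinear_op_def linear_iff dbl_L_def dbl_scale_def split_beta distribs
        scale_right_distrib scale_right_diff_distrib)
qed

lemma symm_dbl_st: "symm (dbl_st st) p = (symm st (fst p), 0)"
  by (cases p) (simp add: symm_def dbl_st_def)

locale zero_dialgebra_inv =
  fixes scale :: "'k::field \<Rightarrow> 'v::ab_group_add \<Rightarrow> 'v"
    and L R :: "'v \<Rightarrow> 'v \<Rightarrow> 'v" and st :: "'v \<Rightarrow> 'v"
  assumes zero_dialg_inv: "zero_dialg_inv scale L R st"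
begin

lemma vector_space_scale: "vector_space scale"
  and bilinear_L: "bilinear_op scale L" and bilinear_R: "bilinear_op scale R"
  and linear_st: "Vector_Spaces.linear scale scale st"
  and L_L_eq_L_R: "L a (L b c) = L a (R b c)"
  and R_L_eq_R_R: "R (L a b) c = R (R a b) c"
  and st_st [simp]: "st (st a) = a"
  and st_L [simp]: "st (L a b) = R (st b) (st a)"
  and st_R [simp]: "st (R a b) = L (st b) (st a)"
  using zero_dialg_inv by (simp_all add: zero_dialg_inv_def)

lemmas operation_distribs [simp] =
  bilinear_op_distribs[OF bilinear_L] bilinear_op_distribs[OF bilinear_R]
  linear_distribs[OF linear_st]

lemma st_symm: "st (symm st x) = symm st x"
  by (simp add: symm_def add.commute)

lemma dbl_L_dbl_L_eq_dbl_L_dbl_R: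
  "dbl_L L R st p (dbl_L L R st q r) = dbl_L L R st p (dbl_R L R st q r)"
  by (simp add: dbl_L_def dbl_R_def split_beta L_L_eq_L_R R_L_eq_R_R)

lemma dbl_R_dbl_L_eq_dbl_R_dbl_R:
  "dbl_R L R st (dbl_L L R st p q) r = dbl_R L R st (dbl_R L R st p q) r"
  by (simp add: dbl_L_def dbl_R_def split_beta L_L_eq_L_R R_L_eq_R_R)

lemma dbl_st_dbl_st: "dbl_st st (dbl_st st p) = p"
  by (simp add: dbl_st_def)

lemma dbl_st_dbl_L: "dbl_st st (dbl_L L R st p q) = dbl_R L R st (dbl_st st q) (dbl_st st p)"
  by (simp add: dbl_L_def dbl_R_def dbl_st_def split_beta)

lemma dbl_st_dbl_R: "dbl_st st (dbl_R L R st p q) = dbl_L L R st (dbl_st st q) (dbl_st st p)"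
  by (simp add: dbl_L_def dbl_R_def dbl_st_def split_beta)

lemma zero_dialg_inv_dbl:
  "zero_dialg_inv (dbl_scale scale) (dbl_L L R st) (dbl_R L R st) (dbl_st st)"
  unfolding zero_dialg_inv_def
  using vector_space_dbl_scale[OF vector_space_scale] linear_dbl_st[OF linear_st]
    bilinear_op_dbl_L[OF vector_space_scale bilinear_L bilinear_R linear_st]
    bilinear_op_dbl_L[OF vector_space_scale bilinear_R bilinear_L linear_st,
      folded dbl_R_eq_dbl_L_swap]
    dbl_L_dbl_L_eq_dbl_L_dbl_R dbl_R_dbl_L_eq_dbl_R_dbl_R dbl_st_dbl_st dbl_st_dbl_L dbl_st_dbl_R
  by blast

lemma brk_dbl_symm_left:
  assumes "\<And>x y. brk L R (symm st x) y = 0"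
  shows "brk (dbl_L L R st) (dbl_R L R st) (symm (dbl_st st) p) q = 0"
  using assms by (simp add: brk_def symm_dbl_st dbl_L_def dbl_R_def split_beta st_symm)

lemma brk_dbl_symm_right:
  assumes "\<And>x y. brk L R x (symm st y) = 0"
  shows "brk (dbl_L L R st) (dbl_R L R st) p (symm (dbl_st st) q) = 0"
  using assms by (simp add: brk_def symm_dbl_st dbl_L_def dbl_R_def split_beta st_symm)

end

theorem lemma5p4:
  fixes scale :: "'k::field \<Rightarrow> 'v::ab_group_add \<Rightarrow> 'v"
    and L R :: "'v \<Rightarrow> 'v \<Rightarrow> 'v" and st :: "'v \<Rightarrow> 'v"
  assumes "partially_symmetric scale L R st"
  shows "partially_symmetric (dbl_scale scale) (dbl_L L R st) (dbl_R L R st) (dbl_st st)"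
proof -
  from assms have "zero_dialg_inv scale L R st"
    and sym_left: "\<And>x y. brk L R (symm st x) y = 0"
    and sym_right: "\<And>x y. brk L R x (symm st y) = 0"
    by (simp_all add: partially_symmetric_def)
  then interpret zero_dialgebra_inv scale L R st
    by unfold_locales
  show ?thesis
    unfolding partially_symmetric_def
    using zero_dialg_inv_dbl brk_dbl_symm_left[OF sym_left] brk_dbl_symm_right[OF sym_right]
    by blast
qed

end
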